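(* Let $\alpha\in(0,1)$ and $\delta>0$. For all $t,s\in\delta\mathbb Z\setminus\{0\}$, writing $t'=t-\frac\delta2\mathrm{sgn}(t)$ and $s'=s-\frac\delta2\mathrm{sgn}(s)$, $$\mathrm{Cov}\Big(\frac{\sqrt2B_\alpha(t')}{|t'|^{\alpha/2}},\frac{\sqrt2B_\alpha(s')}{|s'|^{\alpha/2}}\Big)\le\mathrm{Cov}\Big(\frac{\sqrt2B_\alpha(t)}{|t|^{\alpha/2}},\frac{\sqrt2B_\alpha(s)}{|s|^{\alpha/2}}\Big).$$
   Context: $B_\alpha$ is fractional Brownian motion with $\mathrm{Cov}(B_\alpha(t),B_\alpha(s))=\frac{|t|^\alpha+|s|^\alpha-|t-s|^\alpha}{2}$, $t,s\in\mathbb R$; $\mathrm{sgn}$ is the sign function. *)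

theory Defs
  imports "HOL-Probability.Probability"
begin

definition cov :: "'a measure \<Rightarrow> ('a \<Rightarrow> real) \<Rightarrow> ('a \<Rightarrow> real) \<Rightarrow> real" where
  "cov M X Y = (\<integral>x. (X x - (\<integral>y. X y \<partial>M)) * (Y x - (\<integral>y. Y y \<partial>M)) \<partial>M)"

text \<open>B is a (second-order) process whose covariance is that of fractional Brownian
  motion with parameter alpha (alpha = 2H).\<close>
definition is_fBm :: "'a measure \<Rightarrow> real \<Rightarrow> (real \<Rightarrow> 'a \<Rightarrow> real) \<Rightarrow> bool" where
  "is_fBm M \<alpha> B \<longleftrightarrow> prob_space M \<and>
     (\<forall>t. B t \<in> borel_measurable M \<and> integrable M (\<lambda>x. (B t x)\<^sup>2)) \<and>
     (\<forall>t s. cov M (B t) (B s) = (\<bar>t\<bar> powr \<alpha> + \<bar>s\<bar> powr \<alpha> - \<bar>t - s\<bar> powr \<alpha>) / 2)"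

end

theory Submission
  imports Defs
begin

text \<open>Write \<open>\<rho>(u, v)\<close> for the covariance of the two normalised variables. It is unchanged
  when both arguments are multiplied by the same positive number, negated or swapped, so it is a
  function of the ratio \<open>v / u\<close> alone. For \<open>r \<ge> 1\<close> both \<open>\<rho>(1, r)\<close> and \<open>\<rho>(1, -r)\<close> are
  nonincreasing in \<open>r\<close>: their derivatives have the sign of
  \<open>r powr \<alpha> - 1 - (r \<plusminus> 1) * (r \<mp> 1) powr (\<alpha> - 1)\<close>, which is nonpositive by concavity
  of \<open>x powr \<alpha>\<close>. Moving both points towards the origin by the same amount \<open>\<delta>/2 < min |t| |s|\<close>
  increases the ratio of the larger to the smaller absolute value and so decreases \<open>\<rho>\<close>.\<close>

lemma min_endpoints_le_if_deriv_antimono: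
  fixes f f' :: "real \<Rightarrow> real" and a b x :: real
  assumes x: "a \<le> x" "x \<le> b"
    and f': "\<And>y. a \<le> y \<Longrightarrow> y < b \<Longrightarrow> (f has_real_derivative f' y) (at y)"
    and antimono: "\<And>y z. a \<le> y \<Longrightarrow> y \<le> z \<Longrightarrow> z < b \<Longrightarrow> f' z \<le> f' y"
    and cont: "continuous_on {a..b} f"
  shows "min (f a) (f b) \<le> f x"
proof (cases "\<forall>y\<in>{a..x}. 0 \<le> f' y \<or> y = b")
  case True
  have "f a \<le> f x"
  proof (rule DERIV_nonneg_imp_increasing_open[OF x(1)])
    show "\<exists>d. (f has_real_derivative d) (at y) \<and> 0 \<le> d" if "a < y" "y < x" for y
      using True f' that x by (intro exI[of _ "f' y"]) auto
    show "continuous_on {a..x} f" using cont x by (auto intro: continuous_on_subset)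
  qed
  then show ?thesis by simp
next
  case False
  then obtain y where y: "a \<le> y" "y \<le> x" "y < b" "f' y < 0"
    using x by fastforce
  have "f b \<le> f x"
  proof (rule DERIV_nonpos_imp_decreasing_open[OF x(2)])
    show "\<exists>d. (f has_real_derivative d) (at z) \<and> d \<le> 0" if "x < z" "z < b" for z
      using f' antimono[of y z] y that by (intro exI[of _ "f' z"]) auto
    show "continuous_on {x..b} f" using cont x by (auto intro: continuous_on_subset)
  qed
  then show ?thesis by simp
qed

lemma powr_half_diff_le:
  fixes a d :: real
  assumes a: "0 < a" "a < 1" and d: "0 \<le> d" "d \<le> 1/2"
  shows "(1/2 + d) powr a - (1/2 - d) powr a \<le> 2 * d"
proof -
  \<comment> \<open>\<open>E\<close> vanishes at \<open>0\<close> and \<open>1/2\<close> and is concave in between.\<close>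
  define E where "E x = 2*x - (1/2 + x) powr a + (1/2 - x) powr a" for x :: real
  define E' where "E' x = 2 - a * (1/2 + x) powr (a - 1) - a * (1/2 - x) powr (a - 1)" for x :: real
  define E'' where "E'' x = a * (a - 1) * ((1/2 - x) powr (a - 2) - (1/2 + x) powr (a - 2))"
    for x :: real
  have "min (E 0) (E (1/2)) \<le> E d"
  proof (rule min_endpoints_le_if_deriv_antimono[OF d])
    show "(E has_real_derivative E' y) (at y)" if "0 \<le> y" "y < 1/2" for y
      unfolding E_def E'_def using that by (auto intro!: derivative_eq_intros simp: algebra_simps)
    show "E' z \<le> E' y" if "0 \<le> y" "y \<le> z" "z < 1/2" for y z
    proof (rule deriv_nonpos_imp_antimono[of y z E' E''])
      show "(E' has_real_derivative E'' x) (at x)" if "x \<in> {y..z}" for x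
        unfolding E'_def E''_def using that \<open>0 \<le> y\<close> \<open>z < 1/2\<close>
        by (auto intro!: derivative_eq_intros simp: algebra_simps)
      show "E'' x \<le> 0" if "x \<in> {y..z}" for x
      proof -
        have "(1/2 + x) powr (a - 2) \<le> (1/2 - x) powr (a - 2)"
          using that \<open>0 \<le> y\<close> \<open>z < 1/2\<close> a by (intro powr_mono2') auto
        moreover have "a * (a - 1) \<le> 0" using a by (simp add: mult_nonneg_nonpos)
        ultimately show ?thesis unfolding E''_def by (simp add: mult_nonpos_nonneg)
      qed
    qed (use that in auto)
    show "continuous_on {0..1/2} E"
      unfolding E_def using a
      by (intro continuous_on_add continuous_on_diff continuous_on_powr' continuous_intros) auto
  qed
  moreover have "E 0 = 0" "E (1/2) = 0" unfolding E_def using a by simp_all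
  ultimately show ?thesis unfolding E_def by simp
qed

lemma powr_diff_le_sum_powr:
  fixes a p q :: real
  assumes a: "0 < a" "a < 1" and q: "0 < q" "q \<le> p"
  shows "p powr a - q powr a \<le> (p - q) * (p + q) powr (a - 1)"
proof -
  define S where "S = p + q"
  define d where "d = (p - q) / (2 * S)"
  have S: "0 < S" using q unfolding S_def by simp
  have "0 \<le> d" "d \<le> 1/2" using q S unfolding d_def S_def by (simp_all add: field_simps)
  moreover have "1/2 + d = p / S" "1/2 - d = q / S" "2 * d = (p - q) / S"
    using S unfolding d_def S_def by (simp_all add: field_simps)
  ultimately have "(p / S) powr a - (q / S) powr a \<le> (p - q) / S"
    using powr_half_diff_le[OF a] by metis
  then have "p powr a - q powr a \<le> (p - q) / S * S powr a"
    using S q by (simp add: powr_divide field_simps)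
  also have "\<dots> = (p - q) * S powr (a - 1)"
    using S by (simp add: powr_diff)
  finally show ?thesis unfolding S_def .
qed

lemma powr_minus_one_le:
  fixes a r :: real
  assumes a: "0 < a" "a < 1" and r: "1 < r"
  shows "r powr a - 1 \<le> (r + 1) * (r - 1) powr (a - 1)"
proof -
  have "r powr a - 1 \<le> (r - 1) * (r + 1) powr (a - 1)"
    using powr_diff_le_sum_powr[OF a, of 1 r] r by simp
  also have "\<dots> = (r - 1) powr (2 - a) * ((r + 1) powr (a - 1) * (r - 1) powr (a - 1))"
    using r by (simp add: powr_add[symmetric])
  also have "\<dots> \<le> (r + 1) powr (2 - a) * ((r + 1) powr (a - 1) * (r - 1) powr (a - 1))"
    using r a by (intro mult_right_mono powr_mono2) auto
  also have "\<dots> = (r + 1) * (r - 1) powr (a - 1)"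
    using r by (simp add: powr_add[symmetric] mult.assoc[symmetric])
  finally show ?thesis .
qed

definition fbm_corr :: "real \<Rightarrow> real \<Rightarrow> real \<Rightarrow> real" where
  "fbm_corr a u v =
     (\<bar>u\<bar> powr a + \<bar>v\<bar> powr a - \<bar>u - v\<bar> powr a) / (\<bar>u\<bar> powr (a/2) * \<bar>v\<bar> powr (a/2))"

lemma fbm_corr_commute: "fbm_corr a u v = fbm_corr a v u"
  unfolding fbm_corr_def by (simp add: ac_simps abs_minus_commute)

lemma fbm_corr_minus: "fbm_corr a (- u) (- v) = fbm_corr a u v"
  unfolding fbm_corr_def by (simp add: abs_minus_commute)

lemma fbm_corr_scale:
  fixes a x u v :: real
  assumes "0 < x"
  shows "fbm_corr a (x * u) (x * v) = fbm_corr a u v"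
proof -
  have "x * u - x * v = x * (u - v)" by (simp add: algebra_simps)
  then have "\<bar>x * u\<bar> powr a + \<bar>x * v\<bar> powr a - \<bar>x * u - x * v\<bar> powr a
      = x powr a * (\<bar>u\<bar> powr a + \<bar>v\<bar> powr a - \<bar>u - v\<bar> powr a)"
    using assms by (simp only: abs_mult powr_mult) (simp add: algebra_simps)
  moreover have "\<bar>x * u\<bar> powr (a/2) * \<bar>x * v\<bar> powr (a/2)
      = x powr a * (\<bar>u\<bar> powr (a/2) * \<bar>v\<bar> powr (a/2))"
    using assms by (simp add: abs_mult powr_mult powr_add[symmetric] algebra_simps)
  ultimately show ?thesis
    using assms unfolding fbm_corr_def by simp
qed

lemma fbm_corr_eq_ratio: "0 < x \<Longrightarrow> fbm_corr a x y = fbm_corr a 1 (y / x)"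
  using fbm_corr_scale[of x a 1 "y / x"] by simp

lemma DERIV_corr_same_side:
  fixes a z :: real
  assumes "1 < z"
  shows "((\<lambda>r. (1 + r powr a - (r - 1) powr a) / r powr (a/2)) has_real_derivative
     a / (2 * z * z powr (a/2)) * (z powr a - 1 - (z + 1) * (z - 1) powr (a - 1))) (at z)"
proof -
  have powr_eqs: "z powr (a - 1) = z powr a / z" "z powr ((a - 2) / 2) = z powr (a/2) / z"
    "(z - 1) powr a = (z - 1) * (z - 1) powr (a - 1)"
    "z powr (a/2) * (z powr (a/2) * x) = z powr a * x" for x
    using assms by (simp_all add: powr_diff powr_add[symmetric] diff_divide_distrib)
  show ?thesis
    using assms by (auto intro!: derivative_eq_intros simp: powr_eqs field_simps)
qed

lemma DERIV_corr_opposite_sides: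
  fixes a z :: real
  assumes "0 < z"
  shows "((\<lambda>r. (1 + r powr a - (1 + r) powr a) / r powr (a/2)) has_real_derivative
     a / (2 * z * z powr (a/2)) * (z powr a - 1 - (z - 1) * (1 + z) powr (a - 1))) (at z)"
proof -
  have powr_eqs: "z powr (a - 1) = z powr a / z" "z powr ((a - 2) / 2) = z powr (a/2) / z"
    "(1 + z) powr a = (1 + z) * (1 + z) powr (a - 1)"
    "z powr (a/2) * (z powr (a/2) * x) = z powr a * x" for x
    using assms by (simp_all add: powr_diff powr_add[symmetric] diff_divide_distrib)
  show ?thesis
    using assms by (auto intro!: derivative_eq_intros simp: powr_eqs field_simps)
qed

lemma fbm_corr_one_antimono:
  fixes a r r' :: real
  assumes a: "0 < a" "a < 1" and r: "1 \<le> r" "r \<le> r'"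
  shows "fbm_corr a 1 r' \<le> fbm_corr a 1 r"
proof -
  define g where "g x = (1 + x powr a - (x - 1) powr a) / x powr (a/2)" for x :: real
  have corr_eq: "fbm_corr a 1 x = g x" if "1 \<le> x" for x
    using that unfolding fbm_corr_def g_def by (simp add: abs_minus_commute)
  have "g r' \<le> g r"
  proof (rule DERIV_nonpos_imp_decreasing_open[OF r(2)])
    fix z assume z: "r < z" "z < r'"
    then have "1 < z" using r by simp
    have "z powr a - 1 - (z + 1) * (z - 1) powr (a - 1) \<le> 0"
      using powr_minus_one_le[OF a \<open>1 < z\<close>] by simp
    then have "a / (2 * z * z powr (a/2)) * (z powr a - 1 - (z + 1) * (z - 1) powr (a - 1)) \<le> 0"
      using a \<open>1 < z\<close> by (intro mult_nonneg_nonpos) auto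
    with DERIV_corr_same_side[OF \<open>1 < z\<close>, of a]
    show "\<exists>y. (g has_real_derivative y) (at z) \<and> y \<le> 0"
      unfolding g_def by blast
  next
    show "continuous_on {r..r'} g"
      unfolding g_def using a r
      by (intro continuous_on_divide continuous_on_add continuous_on_diff continuous_on_powr'
          continuous_intros) auto
  qed
  then show ?thesis using corr_eq r by simp
qed

lemma fbm_corr_one_minus_antimono:
  fixes a r r' :: real
  assumes a: "0 < a" "a < 1" and r: "1 \<le> r" "r \<le> r'"
  shows "fbm_corr a 1 (- r') \<le> fbm_corr a 1 (- r)"
proof -
  define g where "g x = (1 + x powr a - (1 + x) powr a) / x powr (a/2)" for x :: real
  have corr_eq: "fbm_corr a 1 (- x) = g x" if "0 < x" for x
    using that unfolding fbm_corr_def g_def by simp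
  have "g r' \<le> g r"
  proof (rule DERIV_nonpos_imp_nonincreasing[OF r(2)])
    fix z assume z: "r \<le> z" "z \<le> r'"
    then have "1 \<le> z" using r by simp
    have "z powr a - 1 - (z - 1) * (1 + z) powr (a - 1) \<le> 0"
      using powr_diff_le_sum_powr[OF a, of 1 z] \<open>1 \<le> z\<close> by (simp add: add.commute)
    then have "a / (2 * z * z powr (a/2)) * (z powr a - 1 - (z - 1) * (1 + z) powr (a - 1)) \<le> 0"
      using a \<open>1 \<le> z\<close> by (intro mult_nonneg_nonpos) auto
    with DERIV_corr_opposite_sides[of z a] \<open>1 \<le> z\<close>
    show "\<exists>y. (g has_real_derivative y) (at z) \<and> y \<le> 0"
      unfolding g_def by auto
  qed
  then show ?thesis using corr_eq r by simp
qed

lemma fbm_corr_shift: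
  fixes a c x y :: real
  assumes a: "0 < a" "a < 1" and c: "0 < c" "c < x" and xy: "x \<le> y"
  shows "fbm_corr a (x - c) (y - c) \<le> fbm_corr a x y"
    and "fbm_corr a (x - c) (c - y) \<le> fbm_corr a x (- y)"
proof -
  have ratio: "1 \<le> y / x" "y / x \<le> (y - c) / (x - c)"
    using c xy by (simp_all add: field_simps mult_left_mono)
  show "fbm_corr a (x - c) (y - c) \<le> fbm_corr a x y"
    using fbm_corr_one_antimono[OF a ratio] fbm_corr_eq_ratio[of x a y]
      fbm_corr_eq_ratio[of "x - c" a "y - c"] c
    by simp
  have "(c - y) / (x - c) = - ((y - c) / (x - c))"
    by (metis minus_diff_eq minus_divide_left)
  then show "fbm_corr a (x - c) (c - y) \<le> fbm_corr a x (- y)"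
    using fbm_corr_one_minus_antimono[OF a ratio] fbm_corr_eq_ratio[of x a "- y"]
      fbm_corr_eq_ratio[of "x - c" a "c - y"] c
    by simp
qed

lemma fbm_corr_shift_towards_zero:
  fixes a c t s :: real
  assumes a: "0 < a" "a < 1" and c: "0 < c" "c < \<bar>t\<bar>" "c < \<bar>s\<bar>"
  shows "fbm_corr a (t - c * sgn t) (s - c * sgn s) \<le> fbm_corr a t s"
proof -
  have pos: "fbm_corr a (t - c * sgn t) (s - c * sgn s) \<le> fbm_corr a t s"
    if "c < t" "t \<le> \<bar>s\<bar>" for t s
  proof (cases "0 < s")
    case True
    then show ?thesis using fbm_corr_shift(1)[OF a c(1) that] that c(1) by simp
  next
    case False
    then show ?thesis
      using fbm_corr_shift(2)[OF a c(1), of t "- s"] that c(1) by (simp add: add.commute)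
  qed
  have le: "fbm_corr a (t - c * sgn t) (s - c * sgn s) \<le> fbm_corr a t s"
    if "c < \<bar>t\<bar>" "\<bar>t\<bar> \<le> \<bar>s\<bar>" for t s
  proof (cases "0 < t")
    case True
    then show ?thesis using pos[of t s] that by simp
  next
    case False
    then have "c < - t" "- t \<le> \<bar>- s\<bar>" using that c(1) by auto
    then have "fbm_corr a (- t - c * sgn (- t)) (- s - c * sgn (- s)) \<le> fbm_corr a (- t) (- s)"
      by (rule pos)
    then show ?thesis
      using fbm_corr_minus[of a "t - c * sgn t" "s - c * sgn s"]
      by (simp add: sgn_minus fbm_corr_minus)
  qed
  show ?thesis
  proof (cases "\<bar>t\<bar> \<le> \<bar>s\<bar>")
    case True
    then show ?thesis by (rule le[OF c(2)])
  next
    case False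
    then have "fbm_corr a (s - c * sgn s) (t - c * sgn t) \<le> fbm_corr a s t"
      by (intro le[OF c(3)]) simp
    then show ?thesis by (subst (1 2) fbm_corr_commute)
  qed
qed

lemma cov_cmult:
  "cov M (\<lambda>x. c * f x) (\<lambda>x. d * g x) = c * d * cov M f g"
proof -
  have "cov M (\<lambda>x. c * f x) (\<lambda>x. d * g x)
      = (\<integral>x. (c * d) * ((f x - (\<integral>y. f y \<partial>M)) * (g x - (\<integral>y. g y \<partial>M))) \<partial>M)"
    unfolding cov_def by (simp add: algebra_simps)
  also have "\<dots> = c * d * cov M f g"
    unfolding cov_def by (rule integral_mult_right_zero)
  finally show ?thesis .
qed

lemma cov_normalized_fBm:
  assumes "is_fBm M a B"
  shows "cov M (\<lambda>x. sqrt 2 * B u x / \<bar>u\<bar> powr (a / 2)) (\<lambda>x. sqrt 2 * B v x / \<bar>v\<bar> powr (a / 2))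
    = fbm_corr a u v"
proof -
  have "cov M (\<lambda>x. sqrt 2 * B u x / \<bar>u\<bar> powr (a / 2)) (\<lambda>x. sqrt 2 * B v x / \<bar>v\<bar> powr (a / 2))
      = sqrt 2 / \<bar>u\<bar> powr (a / 2) * (sqrt 2 / \<bar>v\<bar> powr (a / 2)) * cov M (B u) (B v)"
    using cov_cmult[of M "sqrt 2 / \<bar>u\<bar> powr (a / 2)" "B u" "sqrt 2 / \<bar>v\<bar> powr (a / 2)" "B v"]
    by simp
  also have "\<dots> = fbm_corr a u v"
  proof -
    have "sqrt 2 / m * (sqrt 2 / n) * (X / 2) = X / (m * n)" for m n X :: real
      by (simp add: divide_simps)
    then show ?thesis
      using assms unfolding is_fBm_def fbm_corr_def by presburger
  qed
  finally show ?thesis .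
qed

lemma abs_ge_if_in_lattice:
  fixes \<delta> t :: real
  assumes "t \<in> {\<delta> * of_int k | k. True}" "t \<noteq> 0"
  shows "\<bar>\<delta>\<bar> \<le> \<bar>t\<bar>"
proof -
  obtain k :: int where t: "t = \<delta> * of_int k" using assms(1) by auto
  then have "1 \<le> \<bar>real_of_int k\<bar>" using assms(2) by auto
  then show ?thesis
    unfolding t abs_mult by (simp add: mult_le_cancel_left1)
qed

theorem mainTheorem7:
  fixes M :: "'a measure" and B :: "real \<Rightarrow> 'a \<Rightarrow> real" and \<alpha> \<delta> t s :: real
  assumes "is_fBm M \<alpha> B"
    and "0 < \<alpha>" "\<alpha> < 1" "0 < \<delta>"
    and "t \<in> {\<delta> * of_int k | k. True}" "t \<noteq> 0"
    and "s \<in> {\<delta> * of_int k | k. True}" "s \<noteq> 0"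
  shows "let t' = t - \<delta> / 2 * sgn t; s' = s - \<delta> / 2 * sgn s in
    cov M (\<lambda>x. sqrt 2 * B t' x / \<bar>t'\<bar> powr (\<alpha> / 2)) (\<lambda>x. sqrt 2 * B s' x / \<bar>s'\<bar> powr (\<alpha> / 2))
    \<le> cov M (\<lambda>x. sqrt 2 * B t x / \<bar>t\<bar> powr (\<alpha> / 2)) (\<lambda>x. sqrt 2 * B s x / \<bar>s\<bar> powr (\<alpha> / 2))"
proof -
  have "\<delta> / 2 < \<bar>t\<bar>" "\<delta> / 2 < \<bar>s\<bar>"
    using abs_ge_if_in_lattice[OF assms(5,6)] abs_ge_if_in_lattice[OF assms(7,8)] assms(4) by auto
  then show ?thesis
    unfolding Let_def cov_normalized_fBm[OF assms(1)]
    using assms(4) by (intro fbm_corr_shift_towards_zero[OF assms(2,3)]) simp_all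
qed

end
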